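(* Let $(S,\mathcal C)$ be a connectoid. For every end $\omega$ of $(S,\mathcal C)$ there is a unique direction $d_\omega$ of $(S,\mathcal C)$ such that $d_\omega(A)=K(A,\omega)$ for every finite set $A\subseteq S$. The map $\omega\mapsto d_\omega$ is a bijection between $\Omega(S,\mathcal C)$ and the set of directions of $(S,\mathcal C)$.
   Context: A connectoid is given by a set $S$ and a set $\mathcal F$ of finite subsets of $S$ such that (i) $F\cup F'\in\mathcal F$ whenever $F,F'\in\mathcal F$ and $F\cap F'\neq\emptyset$, and (ii) $\emptyset\in\mathcal F$ and $\{s\}\in\mathcal F$ for every $s\in S$. A set $C\subseteq S$ is connected if for all $x,y\in C$ there is $F\in\mathcal F$ with $F\subseteq C$ and $x,y\in F$; $\mathcal C$ is the set of connected sets and $(S,\mathcal C)$ is the connectoid (the finite connected sets are exactly the elements of $\mathcal F$). For $S'\subseteq S$, a component of $S'$ is a maximal connected subset of $S'$, and $\mathcal K(S')$ is the set of components of $S'$ (it partitions $S'$). "Almost all" means all but finitely many. A necklace is a connected set $N$ for which there is a family $(H_n)_{n\in\mathbb N}$ of finite connected sets with $N=\bigcup_n H_n$ and $H_i\cap H_j\neq\emptyset$ iff $|i-j|\le 1$. For a necklace $N$ and finite $X\subseteq S$, exactly one element of $\mathcal K(N\setminus X)$ contains almost all elements of $N$; it is called the $X$-tail of $N$. Two necklaces are equivalent if for every finite $X\subseteq S$ their $X$-tails are contained in the same element of $\mathcal K(S\setminus X)$. An end is an equivalence class of necklaces; $\Omega(S,\mathcal C)$ is the set of ends. For an end $\omega$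 and finite $X\subseteq S$, $K(X,\omega)$ denotes the element of $\mathcal K(S\setminus X)$ containing the $X$-tails of all necklaces in $\omega$. A direction of $(S,\mathcal C)$ is a map $d$ assigning to every finite $A\subseteq S$ an element $d(A)\in\mathcal K(S\setminus A)$ such that $d(B)\subseteq d(A)$ whenever $A\subseteq B$ are finite subsets of $S$. *)

theory Defs
  imports Main
begin

definition connectoid :: "'a set \<Rightarrow> 'a set set \<Rightarrow> bool" where
  "connectoid S F \<longleftrightarrow>
     (\<forall>H\<in>F. finite H \<and> H \<subseteq> S) \<and>
     (\<forall>H\<in>F. \<forall>H'\<in>F. H \<inter> H' \<noteq> {} \<longrightarrow> H \<union> H' \<in> F) \<and>
     {} \<in> F \<and> (\<forall>s\<in>S. {s} \<in> F)"

definition connected_set :: "'a set \<Rightarrow> 'a set set \<Rightarrow> 'a set \<Rightarrow> bool" where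
  "connected_set S F C \<longleftrightarrow> C \<subseteq> S \<and>
     (\<forall>x\<in>C. \<forall>y\<in>C. \<exists>H\<in>F. H \<subseteq> C \<and> x \<in> H \<and> y \<in> H)"

text \<open>Components: nonempty maximal connected subsets (so that they partition the set).\<close>
definition components :: "'a set \<Rightarrow> 'a set set \<Rightarrow> 'a set \<Rightarrow> 'a set set" where
  "components S F X = {C. C \<noteq> {} \<and> C \<subseteq> X \<and> connected_set S F C \<and>
     (\<forall>D. C \<subseteq> D \<and> D \<subseteq> X \<and> connected_set S F D \<longrightarrow> D = C)}"

definition necklace :: "'a set \<Rightarrow> 'a set set \<Rightarrow> 'a set \<Rightarrow> bool" where
  "necklace S F N \<longleftrightarrow> connected_set S F N \<and>
     (\<exists>H :: nat \<Rightarrow> 'a set. (\<forall>n. H n \<in> F) \<and> N = (\<Union>n. H n) \<and>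
        (\<forall>i j. H i \<inter> H j \<noteq> {} \<longleftrightarrow> i \<le> j + 1 \<and> j \<le> i + 1))"

definition tail :: "'a set \<Rightarrow> 'a set set \<Rightarrow> 'a set \<Rightarrow> 'a set \<Rightarrow> 'a set" where
  "tail S F N X = (THE C. C \<in> components S F (N - X) \<and> finite (N - C))"

definition neck_equiv :: "'a set \<Rightarrow> 'a set set \<Rightarrow> 'a set \<Rightarrow> 'a set \<Rightarrow> bool" where
  "neck_equiv S F N N' \<longleftrightarrow> (\<forall>X. finite X \<and> X \<subseteq> S \<longrightarrow>
     (\<exists>C\<in>components S F (S - X). tail S F N X \<subseteq> C \<and> tail S F N' X \<subseteq> C))"

definition ends :: "'a set \<Rightarrow> 'a set set \<Rightarrow> 'a set set set" where
  "ends S F = {{N'. necklace S F N' \<and> neck_equiv S F N N'} | N. necklace S F N}"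

definition Kend :: "'a set \<Rightarrow> 'a set set \<Rightarrow> 'a set \<Rightarrow> 'a set set \<Rightarrow> 'a set" where
  "Kend S F X \<omega> = (THE C. C \<in> components S F (S - X) \<and> (\<forall>N\<in>\<omega>. tail S F N X \<subseteq> C))"

text \<open>Directions, made extensional: undefined outside finite subsets of S.\<close>
definition direction :: "'a set \<Rightarrow> 'a set set \<Rightarrow> ('a set \<Rightarrow> 'a set) \<Rightarrow> bool" where
  "direction S F d \<longleftrightarrow>
     (\<forall>A. finite A \<and> A \<subseteq> S \<longrightarrow> d A \<in> components S F (S - A)) \<and>
     (\<forall>A B. finite B \<and> B \<subseteq> S \<and> A \<subseteq> B \<longrightarrow> d B \<subseteq> d A) \<and>
     (\<forall>A. \<not> (finite A \<and> A \<subseteq> S) \<longrightarrow> d A = undefined)"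

definition directions :: "'a set \<Rightarrow> 'a set set \<Rightarrow> ('a set \<Rightarrow> 'a set) set" where
  "directions S F = {d. direction S F d}"

end

theory Submission
  imports Defs
begin

text \<open>
  An end \<open>\<omega>\<close> determines a direction through \<open>A \<mapsto> K(A,\<omega>)\<close>, since the \<open>B\<close>-tail of a necklace
  lies in its \<open>A\<close>-tail for \<open>A \<subseteq> B\<close>; ends with the same direction have their tails in the same
  components, i.e. they are equal. Conversely, for a direction \<open>d\<close> one builds a necklace \<open>N\<close> with
  \<open>N - d(X)\<close> finite for every finite \<open>X\<close>; its end then induces \<open>d\<close>. The beads of \<open>N\<close> are chosen
  inside \<open>d(X\<^sub>0) \<supseteq> d(X\<^sub>1) \<supseteq> \<dots>\<close> for an increasing sequence of finite sets \<open>X\<^sub>m\<close>, and the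
  only difficulty is to make the sets \<open>d(X\<^sub>m)\<close> eventually lie inside every \<open>d(X)\<close>. Call a finite
  nonempty \<open>T\<close> persistent if \<open>T \<subseteq> d(W)\<close> for every finite \<open>W\<close> disjoint from \<open>T\<close>. If every \<open>d(X)\<close>
  contains a persistent set, the beads are made to meet pairwise disjoint persistent sets, which
  a given finite \<open>X\<close> eventually avoids. Otherwise some \<open>d(X\<^sub>0)\<close> contains none, and adding for each
  finite \<open>T \<subseteq> d(X\<^sub>0)\<close> a witness of its non-persistence produces finite sets \<open>Z\<^sub>n\<close> with
  \<open>\<Inter>\<^sub>n d(Z\<^sub>n) = {}\<close>; then \<open>d(Z\<^sub>n) \<subseteq> d(X)\<close> for large \<open>n\<close>.
\<close>

lemma eventually_disjoint_finite:
  fixes T :: "nat \<Rightarrow> 'a set"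
  assumes "\<And>x. finite {m. x \<in> T m}" and "finite X"
  shows "\<exists>M. \<forall>m\<ge>M. T m \<inter> X = {}"
proof -
  have "finite (\<Union>x\<in>X. {m. x \<in> T m})" using assms by blast
  then obtain M where "\<forall>m\<in>(\<Union>x\<in>X. {m. x \<in> T m}). m < M"
    unfolding finite_nat_set_iff_bounded by blast
  then have "T m \<inter> X = {}" if "M \<le> m" for m
    using that by fastforce
  then show ?thesis by blast
qed

lemma finite_Int_mono_stabilises:
  fixes Z :: "nat \<Rightarrow> 'a set"
  assumes H: "finite H" and Z: "mono Z"
  shows "\<exists>N. H \<inter> Z (Suc N) = H \<inter> Z N"
proof (rule ccontr)
  assume "\<nexists>N. H \<inter> Z (Suc N) = H \<inter> Z N"
  with Z have grows: "H \<inter> Z N \<subset> H \<inter> Z (Suc N)" for N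
    unfolding mono_iff_le_Suc by blast
  have "N \<le> card (H \<inter> Z N)" for N
  proof (induction N)
    case (Suc N)
    then show ?case using psubset_card_mono[OF _ grows[of N]] H by simp
  qed simp
  moreover have "card (H \<inter> Z (Suc (card H))) \<le> card H"
    using H by (simp add: card_mono)
  ultimately show False
    using Suc_n_not_le_n le_trans by blast
qed

definition bead_chain :: "'a set set \<Rightarrow> (nat \<Rightarrow> 'a set) \<Rightarrow> bool" where
  "bead_chain F K \<longleftrightarrow> (\<forall>n. K n \<in> F) \<and> (\<forall>i j. K i \<inter> K j \<noteq> {} \<longleftrightarrow> i \<le> j + 1 \<and> j \<le> i + 1)"

lemma bead_chain_in: "bead_chain F K \<Longrightarrow> K n \<in> F"
  unfolding bead_chain_def by blast

lemma bead_chain_nonempty: "bead_chain F K \<Longrightarrow> K n \<noteq> {}"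
  unfolding bead_chain_def by (metis inf.idem le_add1)

lemma bead_chain_avoids_finite:
  assumes K: "bead_chain F K" and X: "finite X"
  shows "\<exists>M. \<forall>m\<ge>M. K m \<inter> X = {}"
proof (rule eventually_disjoint_finite[OF _ X])
  fix x
  show "finite {m. x \<in> K m}"
  proof (cases "\<exists>i. x \<in> K i")
    case True
    then obtain i where "x \<in> K i" by blast
    with K have "{m. x \<in> K m} \<subseteq> {..i + 1}"
      unfolding bead_chain_def by blast
    then show ?thesis by (rule finite_subset) simp
  qed simp
qed

lemma bead_chainI:
  assumes in_F: "\<And>m. K m \<in> F" and linked: "\<And>m. K m \<inter> K (Suc m) \<noteq> {}"
    and escapes: "\<And>m. K m \<inter> Y m = {}" and swallowed: "\<And>m. K m \<subseteq> Y (Suc (Suc m))"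
    and Y: "mono Y"
  shows "bead_chain F K"
proof -
  have far: "K i \<inter> K j = {}" if "i + 2 \<le> j" for i j
    using swallowed[of i] monoD[OF Y that] escapes[of j] by auto
  have near: "K i \<inter> K j \<noteq> {}" if "i \<le> j + 1" "j \<le> i + 1" for i j
  proof -
    have "j = i \<or> j = Suc i \<or> i = Suc j" using that by linarith
    then show ?thesis using linked[of i] linked[of j] by auto
  qed
  have "K i \<inter> K j \<noteq> {} \<longleftrightarrow> i \<le> j + 1 \<and> j \<le> i + 1" for i j
    using far[of i j] far[of j i] near[of i j] by (cases "i + 2 \<le> j \<or> j + 2 \<le> i") auto
  with in_F show ?thesis unfolding bead_chain_def by blast
qed

text \<open>
  The frame at \<open>m + 2\<close> swallows the bead \<open>b\<close> built between the frames at \<open>m\<close> and \<open>m + 1\<close>;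
  since later beads avoid their frames, they miss it.
\<close>
fun bead_frame ::
  "('a set \<Rightarrow> 'a set) \<Rightarrow> ('a set \<Rightarrow> 'a set \<Rightarrow> 'a set) \<Rightarrow> (nat \<Rightarrow> 'a set) \<Rightarrow> nat \<Rightarrow> 'a set" where
  "bead_frame c b Z 0 = Z 0"
| "bead_frame c b Z (Suc 0) = Z 0 \<union> Z (Suc 0) \<union> c (Z 0)"
| "bead_frame c b Z (Suc (Suc m)) = bead_frame c b Z (Suc m) \<union> Z (Suc (Suc m)) \<union>
     c (bead_frame c b Z (Suc m)) \<union> b (bead_frame c b Z m) (bead_frame c b Z (Suc m))"

lemma bead_frame_Suc:
  "bead_frame c b Z m \<union> Z (Suc m) \<union> c (bead_frame c b Z m) \<subseteq> bead_frame c b Z (Suc m)"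
proof (cases m)
  case (Suc k)
  then show ?thesis by (simp only: bead_frame.simps) blast
qed simp

lemma mono_bead_frame: "mono (bead_frame c b Z)"
  unfolding mono_iff_le_Suc using bead_frame_Suc by (meson le_supE)

lemma Z_subset_bead_frame: "Z m \<subseteq> bead_frame c b Z m"
proof (cases m)
  case (Suc k)
  then show ?thesis using bead_frame_Suc[of c b Z k] by (meson le_supE)
qed simp

lemma bead_frame_finite_subset:
  assumes Z: "\<And>n. finite (Z n)" "\<And>n. Z n \<subseteq> S"
    and c: "\<And>X. finite X \<Longrightarrow> X \<subseteq> S \<Longrightarrow> finite (c X) \<and> c X \<subseteq> S"
    and b: "\<And>X Y. finite Y \<Longrightarrow> Y \<subseteq> S \<Longrightarrow> X \<subseteq> Y \<Longrightarrow> finite (b X Y) \<and> b X Y \<subseteq> S"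
  shows "finite (bead_frame c b Z m) \<and> bead_frame c b Z m \<subseteq> S"
proof (induction m rule: induct_nat_012)
  case (ge2 m)
  have "bead_frame c b Z m \<subseteq> bead_frame c b Z (Suc m)" using bead_frame_Suc by (meson le_supE)
  with ge2 have "finite (b (bead_frame c b Z m) (bead_frame c b Z (Suc m)))
      \<and> b (bead_frame c b Z m) (bead_frame c b Z (Suc m)) \<subseteq> S"
    using b by blast
  with ge2 c[of "bead_frame c b Z (Suc m)"] Z show ?case by simp
qed (use Z c[of "Z 0"] in simp_all)

locale connectoid_space =
  fixes S :: "'a set" and F :: "'a set set"
  assumes connectoid: "connectoid S F"
begin

lemma F_finite: "H \<in> F \<Longrightarrow> finite H"
  using connectoid unfolding connectoid_def by blast

lemma F_subset: "H \<in> F \<Longrightarrow> H \<subseteq> S"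
  using connectoid unfolding connectoid_def by blast

lemma F_Un: "H \<in> F \<Longrightarrow> H' \<in> F \<Longrightarrow> H \<inter> H' \<noteq> {} \<Longrightarrow> H \<union> H' \<in> F"
  using connectoid unfolding connectoid_def by blast

lemma F_singleton: "s \<in> S \<Longrightarrow> {s} \<in> F"
  using connectoid unfolding connectoid_def by blast

lemma connected_set_F: "H \<in> F \<Longrightarrow> connected_set S F H"
  unfolding connected_set_def using F_subset by blast

lemma connected_set_subset: "connected_set S F C \<Longrightarrow> C \<subseteq> S"
  unfolding connected_set_def by blast

lemma connected_setD:
  "connected_set S F C \<Longrightarrow> x \<in> C \<Longrightarrow> y \<in> C \<Longrightarrow> \<exists>H\<in>F. H \<subseteq> C \<and> x \<in> H \<and> y \<in> H"
  unfolding connected_set_def by blast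

lemma connected_set_Un:
  assumes C: "connected_set S F C" and D: "connected_set S F D" and "C \<inter> D \<noteq> {}"
  shows "connected_set S F (C \<union> D)"
proof -
  obtain z where z: "z \<in> C" "z \<in> D" using \<open>C \<inter> D \<noteq> {}\<close> by blast
  have to_z: "\<exists>H\<in>F. H \<subseteq> C \<union> D \<and> x \<in> H \<and> z \<in> H" if "x \<in> C \<union> D" for x
  proof (cases "x \<in> C")
    case True
    then show ?thesis using connected_setD[OF C True z(1)] by (meson le_supI1)
  next
    case False
    then show ?thesis using that connected_setD[OF D _ z(2), of x] by (meson UnE le_supI2)
  qed
  have "\<exists>H\<in>F. H \<subseteq> C \<union> D \<and> x \<in> H \<and> y \<in> H" if xy: "x \<in> C \<union> D" "y \<in> C \<union> D" for x y
  proof -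
    obtain H where H: "H \<in> F" "H \<subseteq> C \<union> D" "x \<in> H" "z \<in> H" using to_z[OF xy(1)] by blast
    obtain H' where H': "H' \<in> F" "H' \<subseteq> C \<union> D" "y \<in> H'" "z \<in> H'" using to_z[OF xy(2)] by blast
    have "H \<union> H' \<in> F" using F_Un[OF H(1) H'(1)] H(4) H'(4) by blast
    moreover have "H \<union> H' \<subseteq> C \<union> D" using H(2) H'(2) by (rule Un_least)
    ultimately show ?thesis using H(3) H'(3) by blast
  qed
  moreover have "C \<union> D \<subseteq> S" using connected_set_subset[OF C] connected_set_subset[OF D] by (rule Un_least)
  ultimately show ?thesis unfolding connected_set_def by (intro conjI ballI)
qed

lemma componentD:
  assumes "C \<in> components S F Y"
  shows "C \<noteq> {}" "C \<subseteq> Y" "connected_set S F C"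
  using assms unfolding components_def by blast+

lemma component_maximal:
  "C \<in> components S F Y \<Longrightarrow> C \<subseteq> D \<Longrightarrow> D \<subseteq> Y \<Longrightarrow> connected_set S F D \<Longrightarrow> D = C"
  unfolding components_def by blast

lemma connected_subset_component:
  assumes C: "C \<in> components S F Y" and D: "connected_set S F D" "D \<subseteq> Y" and "C \<inter> D \<noteq> {}"
  shows "D \<subseteq> C"
proof -
  have "connected_set S F (C \<union> D)"
    using connected_set_Un[OF componentD(3)[OF C] D(1) \<open>C \<inter> D \<noteq> {}\<close>] .
  moreover have "C \<union> D \<subseteq> Y" using componentD(2)[OF C] D(2) by blast
  ultimately show ?thesis using component_maximal[OF C, of "C \<union> D"] by blast
qed

lemma components_disjoint:
  assumes "C \<in> components S F Y" "C' \<in> components S F Y" "C \<inter> C' \<noteq> {}"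
  shows "C = C'"
  using connected_subset_component[OF assms(1) componentD(3,2)[OF assms(2)] assms(3)]
    connected_subset_component[OF assms(2) componentD(3,2)[OF assms(1)]] assms(3) by blast

lemma component_exists:
  assumes x: "x \<in> Y" and Y: "Y \<subseteq> S"
  shows "\<exists>C\<in>components S F Y. x \<in> C"
proof -
  define U where "U = \<Union>{D. connected_set S F D \<and> D \<subseteq> Y \<and> x \<in> D}"
  have xU: "x \<in> U" using connected_set_F[OF F_singleton] x Y unfolding U_def by blast
  have "connected_set S F U"
    unfolding connected_set_def
  proof (intro conjI ballI)
    show "U \<subseteq> S" using Y unfolding U_def by blast
  next
    fix a b assume "a \<in> U" "b \<in> U"
    then obtain D D' where D: "connected_set S F D" "D \<subseteq> Y" "x \<in> D" "a \<in> D"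
      and D': "connected_set S F D'" "D' \<subseteq> Y" "x \<in> D'" "b \<in> D'" unfolding U_def by blast
    have "connected_set S F (D \<union> D')" using connected_set_Un[OF D(1) D'(1)] D(3) D'(3) by blast
    moreover have "D \<union> D' \<subseteq> U" using D D' unfolding U_def by blast
    ultimately show "\<exists>H\<in>F. H \<subseteq> U \<and> a \<in> H \<and> b \<in> H"
      using connected_setD D(4) D'(4) by (meson UnCI subset_trans)
  qed
  moreover have "D \<subseteq> U" if "connected_set S F D" "D \<subseteq> Y" "U \<subseteq> D" for D
    using that xU unfolding U_def by blast
  moreover have "U \<subseteq> Y" unfolding U_def by blast
  ultimately have "U \<in> components S F Y" using xU unfolding components_def by blast
  with xU show ?thesis by blast
qed

lemma connected_in_component:
  assumes "connected_set S F D" "D \<subseteq> Y" "D \<noteq> {}" "Y \<subseteq> S"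
  shows "\<exists>C\<in>components S F Y. D \<subseteq> C"
proof -
  obtain x where x: "x \<in> D" using assms(3) by blast
  obtain C where C: "C \<in> components S F Y" "x \<in> C" using component_exists[of x Y] x assms(2,4) by blast
  then show ?thesis using connected_subset_component[OF C(1) assms(1,2)] x by blast
qed

lemma bead_chain_segment_in_F:
  assumes K: "bead_chain F K"
  shows "i \<le> j \<Longrightarrow> (\<Union>k\<in>{i..j}. K k) \<in> F"
proof (induction j)
  case 0
  then show ?case using bead_chain_in[OF K] by simp
next
  case (Suc j)
  show ?case
  proof (cases "i \<le> j")
    case True
    have "K j \<inter> K (Suc j) \<noteq> {}" using K unfolding bead_chain_def by simp
    moreover have "K j \<subseteq> (\<Union>k\<in>{i..j}. K k)" using True by auto
    ultimately have "(\<Union>k\<in>{i..j}. K k) \<inter> K (Suc j) \<noteq> {}" by blast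
    then have "(\<Union>k\<in>{i..j}. K k) \<union> K (Suc j) \<in> F"
      using F_Un[OF Suc.IH[OF True] bead_chain_in[OF K]] by blast
    moreover have "{i..Suc j} = insert (Suc j) {i..j}" using True by auto
    ultimately show ?thesis by (simp add: Un_commute)
  next
    case False
    then show ?thesis using Suc.prems bead_chain_in[OF K] by (simp add: le_Suc_eq)
  qed
qed

lemma connected_set_bead_chain_from:
  assumes K: "bead_chain F K"
  shows "connected_set S F (\<Union>k\<in>{M..}. K k)"
  unfolding connected_set_def
proof (intro conjI ballI)
  show "(\<Union>k\<in>{M..}. K k) \<subseteq> S" using F_subset bead_chain_in[OF K] by blast
next
  fix x y assume "x \<in> (\<Union>k\<in>{M..}. K k)" "y \<in> (\<Union>k\<in>{M..}. K k)"
  then obtain i j where ij: "i \<ge> M" "j \<ge> M" "x \<in> K i" "y \<in> K j" by auto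
  let ?H = "\<Union>k\<in>{min i j..max i j}. K k"
  have "?H \<in> F" using bead_chain_segment_in_F[OF K] by simp
  moreover have "{min i j..max i j} \<subseteq> {M..}" using ij by auto
  then have "?H \<subseteq> (\<Union>k\<in>{M..}. K k)" by blast
  moreover have "x \<in> ?H" "y \<in> ?H" using ij by auto
  ultimately show "\<exists>H\<in>F. H \<subseteq> (\<Union>k\<in>{M..}. K k) \<and> x \<in> H \<and> y \<in> H" by blast
qed

lemma infinite_bead_chain_from:
  assumes K: "bead_chain F K"
  shows "infinite (\<Union>k\<in>{M..}. K k)"
proof
  assume "finite (\<Union>k\<in>{M..}. K k)"
  then obtain M' where "\<forall>m\<ge>M'. K m \<inter> (\<Union>k\<in>{M..}. K k) = {}"
    using bead_chain_avoids_finite[OF K] by blast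
  then have "K (max M M') \<inter> (\<Union>k\<in>{M..}. K k) = {}" by simp
  moreover have "K (max M M') \<subseteq> (\<Union>k\<in>{M..}. K k)" by (rule UN_upper) simp
  ultimately have "K (max M M') = {}" by blast
  then show False using bead_chain_nonempty[OF K] by blast
qed

lemma necklace_iff_bead_chain: "necklace S F N \<longleftrightarrow> (\<exists>K. bead_chain F K \<and> N = (\<Union>n. K n))"
  using connected_set_bead_chain_from[of _ 0]
  unfolding necklace_def bead_chain_def by auto

lemma necklace_infinite: "necklace S F N \<Longrightarrow> infinite N"
  using necklace_iff_bead_chain infinite_bead_chain_from[of _ 0] by fastforce

lemma necklace_subset: "necklace S F N \<Longrightarrow> N \<subseteq> S"
  unfolding necklace_def connected_set_def by blast

lemma tail_component:
  assumes N: "necklace S F N" and X: "finite X"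
  shows "tail S F N X \<in> components S F (N - X)" "finite (N - tail S F N X)"
proof -
  obtain K where K: "bead_chain F K" "N = (\<Union>n. K n)" using N necklace_iff_bead_chain by blast
  obtain M where M: "\<forall>m\<ge>M. K m \<inter> X = {}" using bead_chain_avoids_finite[OF K(1) X] by blast
  let ?U = "\<Union>k\<in>{M..}. K k"
  have "?U \<subseteq> N - X" using M K(2) by auto
  moreover have "?U \<noteq> {}" using bead_chain_nonempty[OF K(1), of M] by auto
  ultimately obtain C where C: "C \<in> components S F (N - X)" "?U \<subseteq> C"
    using connected_in_component[OF connected_set_bead_chain_from[OF K(1)]] necklace_subset[OF N]
    by blast
  have "N - C \<subseteq> (\<Union>k\<in>{..<M}. K k)"
  proof
    fix x assume "x \<in> N - C"
    then obtain n where "x \<in> K n" "x \<notin> C" using K(2) by blast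
    with C(2) have "n < M" by (meson UN_I atLeast_iff not_le subsetD)
    with \<open>x \<in> K n\<close> show "x \<in> (\<Union>k\<in>{..<M}. K k)" by blast
  qed
  moreover have "finite (\<Union>k\<in>{..<M}. K k)" using F_finite bead_chain_in[OF K(1)] by blast
  ultimately have cofinite: "finite (N - C)" by (rule finite_subset)
  have unique: "C' = C" if C': "C' \<in> components S F (N - X)" "finite (N - C')" for C'
  proof (rule ccontr)
    assume "C' \<noteq> C"
    then have "N \<subseteq> (N - C) \<union> (N - C')" using components_disjoint[OF C'(1) C(1)] by blast
    moreover have "finite ((N - C) \<union> (N - C'))" using cofinite C'(2) by blast
    ultimately show False using necklace_infinite[OF N] finite_subset by blast
  qed
  have tail_eq: "tail S F N X = C"
    unfolding tail_def by (rule the_equality) (use C(1) cofinite unique in blast)+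
  show "tail S F N X \<in> components S F (N - X)" "finite (N - tail S F N X)"
    unfolding tail_eq using C(1) cofinite by blast+
qed

lemma tail_subset: "necklace S F N \<Longrightarrow> finite X \<Longrightarrow> tail S F N X \<subseteq> N - X"
  by (rule componentD(2)[OF tail_component(1)])

lemma connected_set_tail: "necklace S F N \<Longrightarrow> finite X \<Longrightarrow> connected_set S F (tail S F N X)"
  by (rule componentD(3)[OF tail_component(1)])

lemma infinite_tail:
  assumes "necklace S F N" "finite X"
  shows "infinite (tail S F N X)"
proof
  assume "finite (tail S F N X)"
  then have "finite ((N - tail S F N X) \<union> tail S F N X)" using tail_component(2)[OF assms] by blast
  then show False using necklace_infinite[OF assms(1)] by (simp add: Un_absorb2 tail_subset[OF assms])
qed

lemma tail_nonempty: "necklace S F N \<Longrightarrow> finite X \<Longrightarrow> tail S F N X \<noteq> {}"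
  using infinite_tail by fastforce

lemma tail_meets_cofinite:
  assumes "necklace S F N" "finite X" "finite (N - C)"
  shows "tail S F N X \<inter> C \<noteq> {}"
proof
  assume "tail S F N X \<inter> C = {}"
  then have "tail S F N X \<subseteq> N - C" using tail_subset[OF assms(1,2)] by blast
  then show False using infinite_tail[OF assms(1,2)] assms(3) finite_subset by blast
qed

lemma tail_in_component:
  assumes N: "necklace S F N" and X: "finite X"
  shows "\<exists>C\<in>components S F (S - X). tail S F N X \<subseteq> C"
proof -
  have "tail S F N X \<subseteq> S - X" using tail_subset[OF N X] necklace_subset[OF N] by blast
  moreover have "tail S F N X \<noteq> {}" using tail_nonempty[OF N X] by blast
  ultimately show ?thesis using connected_in_component[OF connected_set_tail[OF N X]] by blast
qed

lemma tail_antimono: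
  assumes N: "necklace S F N" and B: "finite B" and "A \<subseteq> B"
  shows "tail S F N B \<subseteq> tail S F N A"
proof -
  have A: "finite A" using B \<open>A \<subseteq> B\<close> finite_subset by blast
  have "tail S F N A \<inter> tail S F N B \<noteq> {}"
    using tail_meets_cofinite[OF N B tail_component(2)[OF N A]] by blast
  moreover have "tail S F N B \<subseteq> N - A" using tail_subset[OF N B] \<open>A \<subseteq> B\<close> by blast
  ultimately show ?thesis
    using connected_subset_component[OF tail_component(1)[OF N A] connected_set_tail[OF N B]] by blast
qed

lemma neck_equiv_refl: "necklace S F N \<Longrightarrow> neck_equiv S F N N"
  unfolding neck_equiv_def by (auto dest: tail_in_component)

lemma neck_equiv_sym: "neck_equiv S F N N' \<Longrightarrow> neck_equiv S F N' N"
  unfolding neck_equiv_def by (meson subset_refl)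

lemma neck_equiv_trans:
  assumes N': "necklace S F N'" and "neck_equiv S F N N'" "neck_equiv S F N' N''"
  shows "neck_equiv S F N N''"
  unfolding neck_equiv_def
proof (intro allI impI)
  fix X assume X: "finite X \<and> X \<subseteq> S"
  obtain C where C: "C \<in> components S F (S - X)" "tail S F N X \<subseteq> C" "tail S F N' X \<subseteq> C"
    using assms(2) X unfolding neck_equiv_def by blast
  obtain C' where C': "C' \<in> components S F (S - X)" "tail S F N' X \<subseteq> C'" "tail S F N'' X \<subseteq> C'"
    using assms(3) X unfolding neck_equiv_def by blast
  have "tail S F N' X \<noteq> {}" using tail_nonempty[OF N'] X by blast
  then have "C = C'" using components_disjoint[OF C(1) C'(1)] C(3) C'(2) by blast
  then show "\<exists>C\<in>components S F (S - X). tail S F N X \<subseteq> C \<and> tail S F N'' X \<subseteq> C"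
    using C C' by blast
qed

lemma endsE:
  assumes "\<omega> \<in> ends S F"
  obtains N where "necklace S F N" "\<omega> = {N'. necklace S F N' \<and> neck_equiv S F N N'}"
  using assms unfolding ends_def by auto

lemma Kend_eq:
  assumes N: "necklace S F N" and \<omega>: "\<omega> = {N'. necklace S F N' \<and> neck_equiv S F N N'}"
    and A: "finite A" "A \<subseteq> S"
    and C: "C \<in> components S F (S - A)" "tail S F N A \<subseteq> C"
  shows "Kend S F A \<omega> = C"
proof -
  have tail_ne: "tail S F N A \<noteq> {}" using tail_nonempty[OF N A(1)] .
  have "tail S F N' A \<subseteq> C" if "N' \<in> \<omega>" for N'
  proof -
    obtain C' where C': "C' \<in> components S F (S - A)" "tail S F N A \<subseteq> C'" "tail S F N' A \<subseteq> C'"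
      using \<open>N' \<in> \<omega>\<close> A \<omega> unfolding neck_equiv_def by blast
    then show ?thesis using components_disjoint[OF C'(1) C(1)] C(2) tail_ne by blast
  qed
  moreover have "C' = C" if "C' \<in> components S F (S - A)" "tail S F N A \<subseteq> C'" for C'
    using components_disjoint[OF that(1) C(1)] that(2) C(2) tail_ne by blast
  moreover have "N \<in> \<omega>" using \<omega> N neck_equiv_refl by blast
  ultimately show ?thesis
    unfolding Kend_def using C(1) by (intro the_equality) blast+
qed

lemma Kend_component:
  assumes N: "necklace S F N" and \<omega>: "\<omega> = {N'. necklace S F N' \<and> neck_equiv S F N N'}"
    and A: "finite A" "A \<subseteq> S"
  shows "Kend S F A \<omega> \<in> components S F (S - A)" "tail S F N A \<subseteq> Kend S F A \<omega>"
  using tail_in_component[OF N A(1)] Kend_eq[OF N \<omega> A] by auto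

definition dir_of_end :: "'a set set \<Rightarrow> 'a set \<Rightarrow> 'a set" where
  "dir_of_end \<omega> = (\<lambda>A. if finite A \<and> A \<subseteq> S then Kend S F A \<omega> else undefined)"

lemma direction_dir_of_end:
  assumes "\<omega> \<in> ends S F"
  shows "direction S F (dir_of_end \<omega>)"
proof -
  obtain N where N: "necklace S F N" and \<omega>: "\<omega> = {N'. necklace S F N' \<and> neck_equiv S F N N'}"
    using endsE[OF assms] by blast
  have Kend_antimono: "Kend S F B \<omega> \<subseteq> Kend S F A \<omega>" if B: "finite B" "B \<subseteq> S" and "A \<subseteq> B" for A B
  proof -
    have A: "finite A" "A \<subseteq> S" using finite_subset[OF \<open>A \<subseteq> B\<close> B(1)] \<open>A \<subseteq> B\<close> B(2) by auto
    note KA = Kend_component[OF N \<omega> A] and KB = Kend_component[OF N \<omega> B]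
    have "tail S F N B \<subseteq> Kend S F A \<omega> \<inter> Kend S F B \<omega>"
      using tail_antimono[OF N B(1) \<open>A \<subseteq> B\<close>] KA(2) KB(2) by blast
    then have "Kend S F A \<omega> \<inter> Kend S F B \<omega> \<noteq> {}" using tail_nonempty[OF N B(1)] by blast
    moreover have "Kend S F B \<omega> \<subseteq> S - A" using componentD(2)[OF KB(1)] \<open>A \<subseteq> B\<close> by blast
    ultimately show ?thesis
      using connected_subset_component[OF KA(1) componentD(3)[OF KB(1)]] by blast
  qed
  show ?thesis
    unfolding direction_def
  proof (intro conjI allI impI)
    fix A assume "finite A \<and> A \<subseteq> S"
    then show "dir_of_end \<omega> A \<in> components S F (S - A)"
      unfolding dir_of_end_def using Kend_component(1)[OF N \<omega>] by simp
  next
    fix A B assume AB: "finite B \<and> B \<subseteq> S \<and> A \<subseteq> B"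
    then have "finite A \<and> A \<subseteq> S" using finite_subset by auto
    then show "dir_of_end \<omega> B \<subseteq> dir_of_end \<omega> A"
      unfolding dir_of_end_def using Kend_antimono AB by simp
  next
    fix A assume "\<not> (finite A \<and> A \<subseteq> S)"
    then show "dir_of_end \<omega> A = undefined" unfolding dir_of_end_def by auto
  qed
qed

lemma direction_Kend_iff:
  assumes "\<omega> \<in> ends S F"
  shows "direction S F d \<and> (\<forall>A. finite A \<and> A \<subseteq> S \<longrightarrow> d A = Kend S F A \<omega>) \<longleftrightarrow> d = dir_of_end \<omega>"
proof
  assume d: "direction S F d \<and> (\<forall>A. finite A \<and> A \<subseteq> S \<longrightarrow> d A = Kend S F A \<omega>)"
  show "d = dir_of_end \<omega>"
  proof
    fix A
    show "d A = dir_of_end \<omega> A"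
    proof (cases "finite A \<and> A \<subseteq> S")
      case True
      with d show ?thesis unfolding dir_of_end_def by simp
    next
      case False
      with d have "d A = undefined" unfolding direction_def by blast
      then show ?thesis unfolding dir_of_end_def if_not_P[OF False] .
    qed
  qed
next
  assume "d = dir_of_end \<omega>"
  then show "direction S F d \<and> (\<forall>A. finite A \<and> A \<subseteq> S \<longrightarrow> d A = Kend S F A \<omega>)"
    using direction_dir_of_end[OF assms] unfolding dir_of_end_def by simp
qed

lemma inj_on_dir_of_end: "inj_on dir_of_end (ends S F)"
proof
  fix \<omega> \<omega>' assume "\<omega> \<in> ends S F" "\<omega>' \<in> ends S F" and eq: "dir_of_end \<omega> = dir_of_end \<omega>'"
  obtain N where N: "necklace S F N" and \<omega>: "\<omega> = {N''. necklace S F N'' \<and> neck_equiv S F N N''}"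
    using endsE[OF \<open>\<omega> \<in> ends S F\<close>] by blast
  obtain N' where N': "necklace S F N'" and \<omega>': "\<omega>' = {N''. necklace S F N'' \<and> neck_equiv S F N' N''}"
    using endsE[OF \<open>\<omega>' \<in> ends S F\<close>] by blast
  have "neck_equiv S F N N'"
    unfolding neck_equiv_def
  proof (intro allI impI)
    fix X assume X: "finite X \<and> X \<subseteq> S"
    then have "Kend S F X \<omega> = Kend S F X \<omega>'" using fun_cong[OF eq, of X] unfolding dir_of_end_def by simp
    then show "\<exists>C\<in>components S F (S - X). tail S F N X \<subseteq> C \<and> tail S F N' X \<subseteq> C"
      using Kend_component[OF N \<omega>] Kend_component[OF N' \<omega>'] X by metis
  qed
  then have "neck_equiv S F N N'' \<longleftrightarrow> neck_equiv S F N' N''" for N''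
    using neck_equiv_trans neck_equiv_sym N N' by blast
  then show "\<omega> = \<omega>'" using \<omega> \<omega>' by auto
qed

end

locale connectoid_direction = connectoid_space S F for S :: "'a set" and F :: "'a set set" +
  fixes d :: "'a set \<Rightarrow> 'a set"
  assumes direction: "direction S F d"
begin

lemma direction_component: "finite A \<Longrightarrow> A \<subseteq> S \<Longrightarrow> d A \<in> components S F (S - A)"
  using direction unfolding direction_def by (elim conjE) simp

lemma direction_antimono: "finite B \<Longrightarrow> B \<subseteq> S \<Longrightarrow> A \<subseteq> B \<Longrightarrow> d B \<subseteq> d A"
  using direction unfolding direction_def by (elim conjE) simp

lemma direction_nonempty: "finite A \<Longrightarrow> A \<subseteq> S \<Longrightarrow> d A \<noteq> {}"
  using componentD(1)[OF direction_component] .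

lemma direction_subset: "finite A \<Longrightarrow> A \<subseteq> S \<Longrightarrow> d A \<subseteq> S - A"
  using componentD(2)[OF direction_component] .

lemma connected_set_direction: "finite A \<Longrightarrow> A \<subseteq> S \<Longrightarrow> connected_set S F (d A)"
  using componentD(3)[OF direction_component] .

lemma direction_subset_if_disjoint:
  assumes X: "finite X" "X \<subseteq> S" and Y: "finite Y" "Y \<subseteq> S" and "d Y \<inter> X = {}"
  shows "d Y \<subseteq> d X"
proof -
  have XY: "finite (X \<union> Y)" "X \<union> Y \<subseteq> S" using X Y by auto
  have "d (X \<union> Y) \<subseteq> d X \<inter> d Y"
    using direction_antimono[OF XY Un_upper1] direction_antimono[OF XY Un_upper2] by (rule Int_greatest)
  then have "d X \<inter> d Y \<noteq> {}" using direction_nonempty[OF XY] by blast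
  moreover have "d Y \<subseteq> S - X" using direction_subset[OF Y] \<open>d Y \<inter> X = {}\<close> by blast
  ultimately show ?thesis
    using connected_subset_component[OF direction_component[OF X] connected_set_direction[OF Y]]
    by blast
qed

text \<open>
  The bead \<open>K m \<subseteq> d (Xs m)\<close> joins a chosen point of \<open>c (Xs m)\<close> to one of \<open>c (Xs (m + 1))\<close>,
  which links it to \<open>K (m + 1)\<close>.
\<close>
lemma exists_bead_chain:
  assumes c: "\<And>X. finite X \<Longrightarrow> X \<subseteq> S \<Longrightarrow> finite (c X) \<and> c X \<noteq> {} \<and> c X \<subseteq> d X"
    and Z: "\<And>n. finite (Z n)" "\<And>n. Z n \<subseteq> S"
  obtains K Xs where "bead_chain F K" "\<And>m. finite (Xs m)" "\<And>m. Xs m \<subseteq> S" "\<And>m. Z m \<subseteq> Xs m"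
    "\<And>m. K m \<inter> c (Xs m) \<noteq> {}" "\<And>m n. m < n \<Longrightarrow> c (Xs m) \<subseteq> Xs n"
proof -
  define p where "p X = (SOME q. q \<in> c X)" for X
  have p: "p X \<in> c X" if "finite X" "X \<subseteq> S" for X
    unfolding p_def using c[OF that] by (simp add: some_in_eq)
  define b where "b X Y = (SOME H. H \<in> F \<and> H \<subseteq> d X \<and> p X \<in> H \<and> p Y \<in> H)" for X Y
  have b: "b X Y \<in> F \<and> b X Y \<subseteq> d X \<and> p X \<in> b X Y \<and> p Y \<in> b X Y"
    if Y: "finite Y" "Y \<subseteq> S" and "X \<subseteq> Y" for X Y
  proof -
    have X: "finite X" "X \<subseteq> S" using finite_subset[OF \<open>X \<subseteq> Y\<close> Y(1)] \<open>X \<subseteq> Y\<close> Y(2) by auto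
    have "p X \<in> d X" using p[OF X] c[OF X] by blast
    moreover have "p Y \<in> d X" using p[OF Y] c[OF Y] direction_antimono[OF Y \<open>X \<subseteq> Y\<close>] by blast
    ultimately obtain H where "H \<in> F" "H \<subseteq> d X" "p X \<in> H" "p Y \<in> H"
      using connected_setD[OF connected_set_direction[OF X]] by blast
    then show ?thesis unfolding b_def by (intro someI) blast
  qed
  define Xs where "Xs = bead_frame c b Z"
  define K where "K m = b (Xs m) (Xs (Suc m))" for m
  have Xs_mono: "mono Xs" unfolding Xs_def by (rule mono_bead_frame)
  have Xs_Suc: "Xs m \<subseteq> Xs (Suc m)" "c (Xs m) \<subseteq> Xs (Suc m)" for m
    unfolding Xs_def using bead_frame_Suc by (meson le_supE)+
  have Xs_finite: "finite (Xs m) \<and> Xs m \<subseteq> S" for m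
    unfolding Xs_def
  proof (rule bead_frame_finite_subset[OF Z])
    show "finite (c X) \<and> c X \<subseteq> S" if "finite X" "X \<subseteq> S" for X
      using c[OF that] direction_subset[OF that] by blast
    show "finite (b X Y) \<and> b X Y \<subseteq> S" if "finite Y" "Y \<subseteq> S" "X \<subseteq> Y" for X Y
      using b[OF that] F_finite F_subset by blast
  qed
  have K: "K m \<in> F" "K m \<subseteq> d (Xs m)" "p (Xs m) \<in> K m" "p (Xs (Suc m)) \<in> K m" for m
    unfolding K_def using b[OF _ _ Xs_Suc(1)] Xs_finite by blast+
  have "bead_chain F K"
  proof (rule bead_chainI[OF K(1) _ _ _ Xs_mono])
    show "K m \<inter> K (Suc m) \<noteq> {}" for m using K(3,4) by blast
    show "K m \<inter> Xs m = {}" for m using K(2)[of m] direction_subset[of "Xs m"] Xs_finite by blast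
    show "K m \<subseteq> Xs (Suc (Suc m))" for m unfolding K_def Xs_def by simp
  qed
  moreover have "K m \<inter> c (Xs m) \<noteq> {}" for m using K(3) p Xs_finite by blast
  moreover have "c (Xs m) \<subseteq> Xs n" if "m < n" for m n
    using Xs_Suc(2)[of m] monoD[OF Xs_mono, of "Suc m" n] that by simp
  moreover have "Z m \<subseteq> Xs m" for m unfolding Xs_def by (rule Z_subset_bead_frame)
  ultimately show thesis using that Xs_finite by blast
qed

definition converges :: "'a set \<Rightarrow> bool" where
  "converges N \<longleftrightarrow> (\<forall>X. finite X \<and> X \<subseteq> S \<longrightarrow> finite (N - d X))"

lemma converges_bead_chain:
  assumes K: "bead_chain F K"
    and meets: "\<And>X. finite X \<Longrightarrow> X \<subseteq> S \<Longrightarrow> \<exists>M. \<forall>m\<ge>M. K m \<inter> d X \<noteq> {}"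
  shows "\<exists>N. necklace S F N \<and> converges N"
proof -
  have "finite ((\<Union>n. K n) - d X)" if X: "finite X" "X \<subseteq> S" for X
  proof -
    obtain M where M: "\<forall>m\<ge>M. K m \<inter> d X \<noteq> {}" using meets[OF X] by blast
    obtain M' where M': "\<forall>m\<ge>M'. K m \<inter> X = {}" using bead_chain_avoids_finite[OF K X(1)] by blast
    have late: "K m \<subseteq> d X" if "m \<ge> max M M'" for m
    proof (rule connected_subset_component[OF direction_component[OF X] connected_set_F[OF bead_chain_in[OF K]]])
      show "K m \<subseteq> S - X" using M' that F_subset[OF bead_chain_in[OF K]] by auto
      show "d X \<inter> K m \<noteq> {}" using M that by auto
    qed
    have "(\<Union>n. K n) - d X \<subseteq> (\<Union>k\<in>{..<max M M'}. K k)"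
    proof
      fix x assume "x \<in> (\<Union>n. K n) - d X"
      then obtain n where "x \<in> K n" "x \<notin> d X" by blast
      with late have "n < max M M'" by (meson not_le subsetD)
      with \<open>x \<in> K n\<close> show "x \<in> (\<Union>k\<in>{..<max M M'}. K k)" by blast
    qed
    moreover have "finite (\<Union>k\<in>{..<max M M'}. K k)" using F_finite[OF bead_chain_in[OF K]] by simp
    ultimately show ?thesis by (rule finite_subset)
  qed
  then show ?thesis unfolding converges_def necklace_iff_bead_chain using K by blast
qed

definition persistent :: "'a set \<Rightarrow> bool" where
  "persistent T \<longleftrightarrow> finite T \<and> T \<noteq> {} \<and> T \<subseteq> S \<and>
     (\<forall>W. finite W \<and> W \<subseteq> S \<and> W \<inter> T = {} \<longrightarrow> T \<subseteq> d W)"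

lemma converging_necklace_if_persistent:
  assumes "\<And>X. finite X \<Longrightarrow> X \<subseteq> S \<Longrightarrow> \<exists>T. persistent T \<and> T \<subseteq> d X"
  shows "\<exists>N. necklace S F N \<and> converges N"
proof -
  define c where "c X = (SOME T. persistent T \<and> T \<subseteq> d X)" for X
  have c: "persistent (c X) \<and> c X \<subseteq> d X" if "finite X" "X \<subseteq> S" for X
    unfolding c_def using assms[OF that] by (rule someI_ex)
  then have "finite (c X) \<and> c X \<noteq> {} \<and> c X \<subseteq> d X" if "finite X" "X \<subseteq> S" for X
    using that unfolding persistent_def by blast
  then obtain K Xs where K: "bead_chain F K" and Xs: "\<And>m. finite (Xs m)" "\<And>m. Xs m \<subseteq> S"
    and meets: "\<And>m. K m \<inter> c (Xs m) \<noteq> {}"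
    and later: "\<And>m n. m < n \<Longrightarrow> c (Xs m) \<subseteq> Xs n"
    by (rule exists_bead_chain[of c "\<lambda>_. {}"]) auto
  have c_Xs: "persistent (c (Xs m))" "c (Xs m) \<subseteq> S - Xs m" for m
    using c[OF Xs] direction_subset[OF Xs] by blast+
  have disjoint: "c (Xs m) \<inter> c (Xs n) = {}" if "m < n" for m n
    using later[OF that] c_Xs(2)[of n] by blast
  have finite_hits: "finite {m. x \<in> c (Xs m)}" for x
  proof (cases "\<exists>m. x \<in> c (Xs m)")
    case True
    then obtain m where m: "x \<in> c (Xs m)" by blast
    have "n = m" if "x \<in> c (Xs n)" for n
      using that m disjoint[of n m] disjoint[of m n] by (cases n m rule: linorder_cases) auto
    then have "{n. x \<in> c (Xs n)} \<subseteq> {m}" by blast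
    then show ?thesis by (rule finite_subset) simp
  qed simp
  have "\<exists>M. \<forall>m\<ge>M. K m \<inter> d X \<noteq> {}" if X: "finite X" "X \<subseteq> S" for X
  proof -
    obtain M where M: "\<forall>m\<ge>M. c (Xs m) \<inter> X = {}"
      using eventually_disjoint_finite[OF finite_hits X(1)] by blast
    have "K m \<inter> d X \<noteq> {}" if "m \<ge> M" for m
    proof -
      have "X \<inter> c (Xs m) = {}" using M that by (simp add: Int_commute)
      then have "c (Xs m) \<subseteq> d X" using c_Xs(1)[of m] X unfolding persistent_def by blast
      then show ?thesis using meets[of m] by blast
    qed
    then show ?thesis by blast
  qed
  then show ?thesis using converges_bead_chain[OF K] by blast
qed

text \<open>
  A point \<open>y\<close> in every \<open>d (Z n)\<close> is joined to \<open>s\<^sub>0\<close> by a finite connected \<open>H \<subseteq> d X\<^sub>0\<close>. Once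
  \<open>T = H \<inter> Z n\<close> stabilises, the witness \<open>W\<close> added for \<open>T\<close> misses \<open>H\<close>, so \<open>H\<close> lies in \<open>d W\<close>
  together with \<open>y\<close>, contradicting \<open>T \<subseteq> H\<close>.
\<close>
lemma exhausting_if_witnesses_added:
  fixes Z :: "nat \<Rightarrow> 'a set"
  assumes Z: "\<And>n. finite (Z n)" "\<And>n. Z n \<subseteq> S" "mono Z"
    and X0: "finite X0" "X0 \<subseteq> S" "X0 \<subseteq> Z 0" and s0: "s0 \<in> Z 0" "s0 \<in> d X0"
    and witness: "\<And>n T. T \<subseteq> Z n \<inter> d X0 \<Longrightarrow> T \<noteq> {} \<Longrightarrow>
      \<exists>W. W \<subseteq> Z (Suc n) \<and> W \<inter> T = {} \<and> \<not> T \<subseteq> d W"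
  shows "\<exists>n. y \<notin> d (Z n)"
proof (rule ccontr)
  assume "\<nexists>n. y \<notin> d (Z n)"
  then have y: "y \<in> d (Z n)" for n by blast
  have "y \<in> d X0" using direction_antimono[OF Z(1,2) X0(3)] y[of 0] by (rule subsetD)
  then obtain H where H: "H \<in> F" "H \<subseteq> d X0" "y \<in> H" "s0 \<in> H"
    using connected_setD[OF connected_set_direction[OF X0(1,2)] _ s0(2)] by blast
  obtain n where n: "H \<inter> Z (Suc n) = H \<inter> Z n"
    using finite_Int_mono_stabilises[OF F_finite[OF H(1)] Z(3)] by blast
  define T where "T = H \<inter> Z n"
  have "s0 \<in> Z n" using monoD[OF Z(3), of 0 n] s0(1) by auto
  then have T: "T \<subseteq> Z n \<inter> d X0" "T \<noteq> {}" using H(2,4) unfolding T_def by blast+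
  obtain W where W: "W \<subseteq> Z (Suc n)" "W \<inter> T = {}" "\<not> T \<subseteq> d W" using witness[OF T] by blast
  have W_finite: "finite W" "W \<subseteq> S" using finite_subset[OF W(1) Z(1)] W(1) Z(2) by auto
  have "H \<inter> W = {}" using W(1,2) n unfolding T_def by blast
  then have "H \<subseteq> S - W" using F_subset[OF H(1)] by blast
  moreover have "d W \<inter> H \<noteq> {}" using y[of "Suc n"] direction_antimono[OF Z(1,2) W(1)] H(3) by blast
  ultimately have "H \<subseteq> d W"
    by (rule connected_subset_component[OF direction_component[OF W_finite] connected_set_F[OF H(1)]])
  then show False using W(3) unfolding T_def by blast
qed

lemma exhausting_sequence_if_not_persistent:
  assumes X0: "finite X0" "X0 \<subseteq> S" and not_persistent: "\<And>T. persistent T \<Longrightarrow> \<not> T \<subseteq> d X0"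
  obtains Z :: "nat \<Rightarrow> 'a set"
  where "\<And>n. finite (Z n)" "\<And>n. Z n \<subseteq> S" "mono Z" "\<And>y. \<exists>n. y \<notin> d (Z n)"
proof -
  obtain s0 where s0: "s0 \<in> d X0" using direction_nonempty[OF X0] by blast
  have "\<exists>W. finite W \<and> W \<subseteq> S \<and> W \<inter> T = {} \<and> \<not> T \<subseteq> d W"
    if "finite T" "T \<noteq> {}" "T \<subseteq> d X0" for T
    using that not_persistent[of T] direction_subset[OF X0] unfolding persistent_def by blast
  then obtain wit where wit: "\<And>T. finite T \<Longrightarrow> T \<noteq> {} \<Longrightarrow> T \<subseteq> d X0 \<Longrightarrow>
      finite (wit T) \<and> wit T \<subseteq> S \<and> wit T \<inter> T = {} \<and> \<not> T \<subseteq> d (wit T)"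
    by metis
  define Z where "Z = rec_nat (insert s0 X0) (\<lambda>_ Y. Y \<union> \<Union>(wit ` {T. T \<subseteq> Y \<inter> d X0 \<and> T \<noteq> {}}))"
  have Z_0: "Z 0 = insert s0 X0" unfolding Z_def by simp
  have Z_Suc: "Z (Suc n) = Z n \<union> \<Union>(wit ` {T. T \<subseteq> Z n \<inter> d X0 \<and> T \<noteq> {}})" for n
    unfolding Z_def by simp
  have Z_finite: "finite (Z n) \<and> Z n \<subseteq> S" for n
  proof (induction n)
    case 0
    then show ?case using s0 direction_subset[OF X0] X0 unfolding Z_0 by auto
  next
    case (Suc n)
    have "finite {T. T \<subseteq> Z n \<inter> d X0 \<and> T \<noteq> {}}" using Suc.IH by simp
    moreover have "finite (wit T) \<and> wit T \<subseteq> S" if "T \<subseteq> Z n \<inter> d X0" "T \<noteq> {}" for T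
      using wit[of T] that Suc.IH finite_subset by blast
    ultimately show ?case unfolding Z_Suc using Suc.IH by auto
  qed
  have Z_mono: "mono Z" unfolding mono_iff_le_Suc Z_Suc by blast
  have witnesses: "\<exists>W. W \<subseteq> Z (Suc n) \<and> W \<inter> T = {} \<and> \<not> T \<subseteq> d W"
    if "T \<subseteq> Z n \<inter> d X0" "T \<noteq> {}" for n T
  proof (intro exI conjI)
    show "wit T \<subseteq> Z (Suc n)" unfolding Z_Suc using that by blast
    have "finite T" using that(1) Z_finite finite_subset by blast
    then show "wit T \<inter> T = {}" "\<not> T \<subseteq> d (wit T)" using wit that by blast+
  qed
  have "X0 \<subseteq> Z 0" "s0 \<in> Z 0" by (simp_all add: Z_0 subset_insertI)
  then have exhausting: "\<exists>n. y \<notin> d (Z n)" for y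
    by (rule exhausting_if_witnesses_added[OF conjunct1[OF Z_finite] conjunct2[OF Z_finite] Z_mono X0
          _ _ s0 witnesses])
  show thesis by (rule that) (use Z_finite Z_mono exhausting in simp_all)
qed

lemma converging_necklace_if_exhausting:
  fixes Z :: "nat \<Rightarrow> 'a set"
  assumes Z: "\<And>n. finite (Z n)" "\<And>n. Z n \<subseteq> S" "mono Z" and exhausting: "\<And>y. \<exists>n. y \<notin> d (Z n)"
  shows "\<exists>N. necklace S F N \<and> converges N"
proof -
  have d_Z_antimono: "d (Z n) \<subseteq> d (Z m)" if "m \<le> n" for m n
    by (rule direction_antimono[OF Z(1,2) monoD[OF Z(3) that]])
  define c where "c X = {SOME p. p \<in> d X}" for X
  have c: "finite (c X) \<and> c X \<noteq> {} \<and> c X \<subseteq> d X" if "finite X" "X \<subseteq> S" for X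
    unfolding c_def using direction_nonempty[OF that] by (simp add: some_in_eq)
  obtain K Xs where K: "bead_chain F K" and Xs: "\<And>m. finite (Xs m)" "\<And>m. Xs m \<subseteq> S"
    and Z_Xs: "\<And>m. Z m \<subseteq> Xs m" and meets: "\<And>m. K m \<inter> c (Xs m) \<noteq> {}"
    by (rule exists_bead_chain[of c Z, OF c Z(1,2)]) auto
  have "\<exists>M. \<forall>m\<ge>M. K m \<inter> d X \<noteq> {}" if X: "finite X" "X \<subseteq> S" for X
  proof -
    have "finite {n. y \<in> d (Z n)}" for y
    proof -
      obtain n where n: "y \<notin> d (Z n)" using exhausting by blast
      have "{k. y \<in> d (Z k)} \<subseteq> {..<n}"
      proof
        fix k assume "k \<in> {k. y \<in> d (Z k)}"
        then have "\<not> n \<le> k" using n d_Z_antimono by blast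
        then show "k \<in> {..<n}" by simp
      qed
      then show ?thesis by (rule finite_subset) simp
    qed
    then obtain M where "\<forall>m\<ge>M. d (Z m) \<inter> X = {}"
      using eventually_disjoint_finite[of "\<lambda>n. d (Z n)", OF _ X(1)] by blast
    then have "d (Z M) \<inter> X = {}" by simp
    then have d_Z_M: "d (Z M) \<subseteq> d X" by (rule direction_subset_if_disjoint[OF X Z(1,2)])
    have "K m \<inter> d X \<noteq> {}" if "m \<ge> M" for m
    proof -
      have "c (Xs m) \<subseteq> d (Xs m)" using c[OF Xs] by blast
      also have "\<dots> \<subseteq> d (Z m)" by (rule direction_antimono[OF Xs Z_Xs])
      also have "\<dots> \<subseteq> d (Z M)" by (rule d_Z_antimono[OF that])
      also have "\<dots> \<subseteq> d X" by (rule d_Z_M)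
      finally show ?thesis using meets[of m] by blast
    qed
    then show ?thesis by blast
  qed
  then show ?thesis by (rule converges_bead_chain[OF K])
qed

lemma exists_converging_necklace: "\<exists>N. necklace S F N \<and> converges N"
proof (cases "\<forall>X. finite X \<and> X \<subseteq> S \<longrightarrow> (\<exists>T. persistent T \<and> T \<subseteq> d X)")
  case True
  then show ?thesis by (intro converging_necklace_if_persistent) simp
next
  case False
  then obtain X0 where X0: "finite X0" "X0 \<subseteq> S" and "\<And>T. persistent T \<Longrightarrow> \<not> T \<subseteq> d X0" by blast
  then obtain Z :: "nat \<Rightarrow> 'a set"
    where "\<And>n. finite (Z n)" "\<And>n. Z n \<subseteq> S" "mono Z" "\<And>y. \<exists>n. y \<notin> d (Z n)"
    by (rule exhausting_sequence_if_not_persistent) auto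
  then show ?thesis by (rule converging_necklace_if_exhausting)
qed

lemma direction_in_image_dir_of_end: "d \<in> dir_of_end ` ends S F"
proof -
  obtain N where N: "necklace S F N" and "converges N" using exists_converging_necklace by blast
  define \<omega> where "\<omega> = {N'. necklace S F N' \<and> neck_equiv S F N N'}"
  have "\<omega> \<in> ends S F" unfolding ends_def \<omega>_def using N by blast
  have d_Kend: "d A = Kend S F A \<omega>" if A: "finite A" "A \<subseteq> S" for A
  proof -
    have "finite (N - d A)" using \<open>converges N\<close> A by (simp add: converges_def)
    then have "d A \<inter> tail S F N A \<noteq> {}" using tail_meets_cofinite[OF N A(1)] by blast
    moreover have "tail S F N A \<subseteq> S - A" using tail_subset[OF N A(1)] necklace_subset[OF N] by blast
    ultimately have "tail S F N A \<subseteq> d A"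
      by (intro connected_subset_component[OF direction_component[OF A] connected_set_tail[OF N A(1)]])
    then show ?thesis using Kend_eq[OF N \<omega>_def A direction_component[OF A]] by simp
  qed
  have "d = dir_of_end \<omega>"
    using direction d_Kend by (simp add: direction_Kend_iff[OF \<open>\<omega> \<in> ends S F\<close>, symmetric])
  then show ?thesis using \<open>\<omega> \<in> ends S F\<close> by (rule image_eqI)
qed

end

lemma (in connectoid_space) bij_betw_dir_of_end: "bij_betw dir_of_end (ends S F) (directions S F)"
proof -
  have "directions S F \<subseteq> dir_of_end ` ends S F"
  proof
    fix d assume "d \<in> directions S F"
    then have "connectoid_direction S F d"
      using connectoid_space_axioms
      by (simp add: connectoid_direction_def connectoid_direction_axioms_def directions_def)
    then show "d \<in> dir_of_end ` ends S F" by (rule connectoid_direction.direction_in_image_dir_of_end)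
  qed
  moreover have "dir_of_end ` ends S F \<subseteq> directions S F"
    unfolding directions_def using direction_dir_of_end by blast
  ultimately show ?thesis unfolding bij_betw_def using inj_on_dir_of_end by blast
qed

theorem theorem1p1:
  fixes S :: "'a set" and F :: "'a set set"
  assumes "connectoid S F"
  shows "(\<forall>\<omega>\<in>ends S F. \<exists>!d. direction S F d \<and>
            (\<forall>A. finite A \<and> A \<subseteq> S \<longrightarrow> d A = Kend S F A \<omega>))
       \<and> bij_betw (\<lambda>\<omega>. THE d. direction S F d \<and>
            (\<forall>A. finite A \<and> A \<subseteq> S \<longrightarrow> d A = Kend S F A \<omega>))
            (ends S F) (directions S F)"
proof -
  interpret connectoid_space S F by unfold_locales (rule assms)
  have THE_eq: "(THE d. direction S F d \<and> (\<forall>A. finite A \<and> A \<subseteq> S \<longrightarrow> d A = Kend S F A \<omega>))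
      = dir_of_end \<omega>" if "\<omega> \<in> ends S F" for \<omega>
    by (simp add: direction_Kend_iff[OF that])
  have "bij_betw (\<lambda>\<omega>. THE d. direction S F d \<and> (\<forall>A. finite A \<and> A \<subseteq> S \<longrightarrow> d A = Kend S F A \<omega>))
      (ends S F) (directions S F)"
    by (subst bij_betw_cong[OF THE_eq]) (assumption, rule bij_betw_dir_of_end)
  moreover have "\<forall>\<omega>\<in>ends S F. \<exists>!d. direction S F d \<and> (\<forall>A. finite A \<and> A \<subseteq> S \<longrightarrow> d A = Kend S F A \<omega>)"
    by (simp add: direction_Kend_iff)
  ultimately show ?thesis by blast
qed

end
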